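(* Consider the $Q\times2$ coin problem below with $Q\ge12$, and let $C_1=40$, $C_2=64$. For any algorithm $\mathrm{Alg}$, if \[ N_1\le T_1:=\frac{Q}{4C_1\lambda^2}\quad\text{and}\quad N_2\le T_2:=\frac{Q(\delta+\epsilon)}{4C_2\epsilon^2}, \] then there exists a set $J\subseteq[Q]$ with $|J|\ge\frac{Q}{6}$ such that $\mathbb P_j[\hat\theta=j]\le\frac12$ for all $j\in J$.
   Context: Coin problem: constants $\delta,\lambda,\epsilon\in(0,\frac14]$ and $2Q$ coins arranged in a $Q\times2$ table (rows $1,\dots,Q$, columns $1,2$), one coin per cell. There is an unknown special row $\theta\in[Q]$. In column 1 all coins are fair except the coin in row $\theta$, whose probability of heads is $\frac12+\lambda$. In column 2 all coins have probability of heads $\delta$ except the coin in row $\theta$, with probability of heads $\delta+\epsilon$. An algorithm sequentially chooses coins to flip, each choice possibly depending on all previous outcomes, performs a (possibly random, data-dependent) total of $\tau=N_1+N_2\le H$ flips for a fixed budget $H>0$, where $N_1$ and $N_2$ are the numbers of flips of coins in column 1 and column 2 respectively, and then outputs a prediction $\hat\theta\in[Q]$. For $j\in[Q]$, $\mathbb P_j$ denotes the probability measure induced by the algorithm and the coins when $\theta=j$. *)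

theory Defs
  imports "HOL-Probability.Probability"
begin

text \<open>Coin problem model.  Rows are 1..Q, columns 1,2.  A history is the list of
  performed flips: ((row, column), outcome), outcome True = heads.\<close>

datatype action = Flip nat nat | Stop nat

type_synonym history = "((nat \<times> nat) \<times> bool) list"

type_synonym algorithm = "history \<Rightarrow> action pmf"

definition coin_prob :: "real \<Rightarrow> real \<Rightarrow> real \<Rightarrow> nat \<Rightarrow> nat \<Rightarrow> nat \<Rightarrow> real" where
  "coin_prob lam delta eps theta r c =
     (if c = 1 then (if r = theta then 1/2 + lam else 1/2)
      else (if r = theta then delta + eps else delta))"

fun run :: "real \<Rightarrow> real \<Rightarrow> real \<Rightarrow> nat \<Rightarrow> algorithm \<Rightarrow> nat \<Rightarrow> history
            \<Rightarrow> (history \<times> nat) pmf" where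
  "run lam delta eps theta alg 0 h =
     map_pmf (\<lambda>a. case a of Stop k \<Rightarrow> (h, k) | Flip r c \<Rightarrow> (h, 0)) (alg h)"
| "run lam delta eps theta alg (Suc n) h =
     alg h \<bind> (\<lambda>a. case a of
        Stop k \<Rightarrow> return_pmf (h, k)
      | Flip r c \<Rightarrow> bernoulli_pmf (coin_prob lam delta eps theta r c) \<bind>
                     (\<lambda>b. run lam delta eps theta alg n (h @ [((r, c), b)])))"

definition valid_alg :: "nat \<Rightarrow> nat \<Rightarrow> algorithm \<Rightarrow> bool" where
  "valid_alg Q H alg \<longleftrightarrow>
     (\<forall>h. \<forall>a \<in> set_pmf (alg h).
        (\<forall>r c. a = Flip r c \<longrightarrow> r \<in> {1..Q} \<and> c \<in> {1,2} \<and> length h < H) \<and>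
        (\<forall>k. a = Stop k \<longrightarrow> k \<in> {1..Q}))"

definition P :: "real \<Rightarrow> real \<Rightarrow> real \<Rightarrow> nat \<Rightarrow> algorithm \<Rightarrow> nat \<Rightarrow> (history \<times> nat) pmf" where
  "P lam delta eps H alg j = run lam delta eps j alg H []"

definition N1 :: "history \<Rightarrow> nat" where
  "N1 h = length (filter (\<lambda>x. snd (fst x) = 1) h)"

definition N2 :: "history \<Rightarrow> nat" where
  "N2 h = length (filter (\<lambda>x. snd (fst x) = 2) h)"

end

theory Submission
  imports Defs
begin

(* Compare each world \<theta> = j with the null world \<theta> = 0, in which no coin is biased. By the
   chain rule and data processing for KL divergence, the divergence between the two laws of the
   guess is at most the expected sum, over the flips performed in the null world, of the
   divergence between the two biases of the flipped coin, i.e. kl(1/2, 1/2 + lam) times the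
   expected number of flips of coin (j, 1) plus kl(delta, delta + eps) times that of coin (j, 2).
   In the null world the guess probabilities sum to at most 1 and the expected flip counts of
   columns 1 and 2 sum to at most T1 and T2, so by Markov's inequality at least Q/6 rows j are
   guessed with probability at most 3/Q <= 1/4 and have divergence at most 1/15 + 1/32 < 11/108.
   For such j, a divergence this small cannot move the probability of guessing j from 1/4 to
   above 1/2. *)

section \<open>Relative entropy and binary KL divergence\<close>

definition rel_entr :: "real \<Rightarrow> real \<Rightarrow> real" where
  "rel_entr a b = (if a = 0 then 0 else a * ln (a / b))"

definition kl_bernoulli :: "real \<Rightarrow> real \<Rightarrow> real" where
  "kl_bernoulli p q = rel_entr p q + rel_entr (1 - p) (1 - q)"

lemma rel_entr_self [simp]: "rel_entr a a = 0"
  by (simp add: rel_entr_def)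

lemma kl_bernoulli_self [simp]: "kl_bernoulli p p = 0"
  by (simp add: kl_bernoulli_def)

lemma rel_entr_lower_bound:
  assumes "0 \<le> a" "0 \<le> b" "0 < a \<Longrightarrow> 0 < b" "0 < c"
  shows "a * ln c + a - b * c \<le> rel_entr a b"
proof (cases "a = 0")
  case True
  then show ?thesis using assms by (simp add: rel_entr_def)
next
  case False
  then have a: "0 < a" and b: "0 < b" using assms by auto
  have "ln (b * c / a) \<le> b * c / a - 1"
    using a b assms(4) by (intro ln_le_minus_one) simp
  then have "a * ln (b * c / a) \<le> a * (b * c / a - 1)"
    using a by (intro mult_left_mono) auto
  moreover have "ln (b * c / a) = ln c - ln (a / b)"
    using a b assms(4) by (simp add: ln_div ln_mult)
  ultimately show ?thesis using a by (simp add: rel_entr_def algebra_simps)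
qed

lemma rel_entr_upper_bound:
  assumes "0 \<le> a" "0 < b"
  shows "rel_entr a b \<le> a * (a / b - 1)"
proof (cases "a = 0")
  case False
  then have "ln (a / b) \<le> a / b - 1" using assms by (intro ln_le_minus_one) simp
  then show ?thesis using assms by (simp add: rel_entr_def mult_left_mono)
qed (simp add: rel_entr_def)

lemma rel_entr_mult:
  assumes "0 \<le> p" "0 < p \<Longrightarrow> 0 < q" "0 \<le> a" "0 < a \<Longrightarrow> 0 < b"
  shows "rel_entr (p * a) (q * b) = a * rel_entr p q + p * rel_entr a b"
proof (cases "p = 0 \<or> a = 0")
  case False
  then have "0 < p" "0 < q" "0 < a" "0 < b" using assms by auto
  then have "ln ((p * a) / (q * b)) = ln (p / q) + ln (a / b)"
    by (simp add: ln_div ln_mult)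
  then show ?thesis using False by (simp add: rel_entr_def algebra_simps)
qed (auto simp: rel_entr_def)

lemma log_sum_inequality:
  assumes "finite S" "\<And>i. i \<in> S \<Longrightarrow> 0 \<le> a i" "\<And>i. i \<in> S \<Longrightarrow> 0 \<le> b i"
    "\<And>i. i \<in> S \<Longrightarrow> 0 < a i \<Longrightarrow> 0 < b i"
  shows "rel_entr (\<Sum>i\<in>S. a i) (\<Sum>i\<in>S. b i) \<le> (\<Sum>i\<in>S. rel_entr (a i) (b i))"
proof (cases "(\<Sum>i\<in>S. a i) = 0")
  case True
  then show ?thesis using assms by (simp add: rel_entr_def sum_nonneg_eq_0_iff)
next
  case False
  define A where "A = (\<Sum>i\<in>S. a i)"
  define B where "B = (\<Sum>i\<in>S. b i)"
  obtain i where i: "i \<in> S" "0 < a i"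
    using False assms(1,2) by (metis order_less_le sum_nonneg_eq_0_iff)
  have "0 < A" using False assms(2) unfolding A_def by (simp add: sum_nonneg order_less_le)
  moreover have "0 < B"
    using i assms member_le_sum[of i S b] unfolding B_def by force
  ultimately have "rel_entr A B = (\<Sum>i\<in>S. a i * ln (A / B) + a i - b i * (A / B))"
    unfolding A_def B_def
    by (simp add: rel_entr_def sum.distrib sum_subtractf flip: sum_distrib_right sum_divide_distrib)
  also have "\<dots> \<le> (\<Sum>i\<in>S. rel_entr (a i) (b i))"
    using assms \<open>0 < A\<close> \<open>0 < B\<close> by (intro sum_mono rel_entr_lower_bound) auto
  finally show ?thesis unfolding A_def B_def .
qed

text \<open>Bernoulli(x) is absolutely continuous with respect to Bernoulli(y), and the KL divergence
  between them is at most e.\<close>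
definition kl_bounded :: "real \<Rightarrow> real \<Rightarrow> real \<Rightarrow> bool" where
  "kl_bounded x y e \<longleftrightarrow> x \<in> {0..1} \<and> y \<in> {0..1} \<and> (0 < x \<longrightarrow> 0 < y) \<and>
     (0 < 1 - x \<longrightarrow> 0 < 1 - y) \<and> kl_bernoulli x y \<le> e"

lemma kl_bounded_refl: "x \<in> {0..1} \<Longrightarrow> kl_bounded x x 0"
  by (simp add: kl_bounded_def)

lemma kl_bounded_mono: "kl_bounded x y e \<Longrightarrow> e \<le> e' \<Longrightarrow> kl_bounded x y e'"
  by (auto simp: kl_bounded_def)

lemma sum_mult_pos_transfer:
  fixes \<pi> \<rho> X Y :: "'a \<Rightarrow> real"
  assumes "finite S" "0 < (\<Sum>a\<in>S. \<pi> a * X a)"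
    and "\<And>a. a \<in> S \<Longrightarrow> 0 \<le> \<pi> a \<and> 0 \<le> \<rho> a \<and> 0 \<le> X a \<and> 0 \<le> Y a"
    and "\<And>a. a \<in> S \<Longrightarrow> 0 < \<pi> a \<Longrightarrow> 0 < \<rho> a" "\<And>a. a \<in> S \<Longrightarrow> 0 < X a \<Longrightarrow> 0 < Y a"
  shows "0 < (\<Sum>a\<in>S. \<rho> a * Y a)"
proof -
  obtain a where "a \<in> S" "0 < \<pi> a * X a"
    using assms(2) sum_nonpos[of S "\<lambda>a. \<pi> a * X a"] by (meson not_le)
  then have "0 < \<rho> a * Y a"
    using assms(3-5)[OF \<open>a \<in> S\<close>] by (auto simp: zero_less_mult_iff)
  then show ?thesis
    using \<open>a \<in> S\<close> assms(1,3) by (intro sum_pos2[of S a]) auto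
qed

lemma rel_entr_mixture_le:
  fixes \<pi> \<rho> X Y :: "'a \<Rightarrow> real"
  assumes "finite S"
    and "\<And>a. a \<in> S \<Longrightarrow> 0 \<le> \<pi> a \<and> 0 \<le> \<rho> a \<and> 0 \<le> X a \<and> 0 \<le> Y a"
    and "\<And>a. a \<in> S \<Longrightarrow> 0 < \<pi> a \<Longrightarrow> 0 < \<rho> a" "\<And>a. a \<in> S \<Longrightarrow> 0 < X a \<Longrightarrow> 0 < Y a"
  shows "rel_entr (\<Sum>a\<in>S. \<pi> a * X a) (\<Sum>a\<in>S. \<rho> a * Y a)
           \<le> (\<Sum>a\<in>S. X a * rel_entr (\<pi> a) (\<rho> a) + \<pi> a * rel_entr (X a) (Y a))"
proof -
  have "0 \<le> \<pi> a * X a" "0 \<le> \<rho> a * Y a" "0 < \<pi> a * X a \<Longrightarrow> 0 < \<rho> a * Y a"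
    if "a \<in> S" for a
    using assms(2-4)[OF that] by (auto simp: zero_less_mult_iff)
  then have "rel_entr (\<Sum>a\<in>S. \<pi> a * X a) (\<Sum>a\<in>S. \<rho> a * Y a)
          \<le> (\<Sum>a\<in>S. rel_entr (\<pi> a * X a) (\<rho> a * Y a))"
    using assms(1) by (intro log_sum_inequality)
  also have "\<dots> = (\<Sum>a\<in>S. X a * rel_entr (\<pi> a) (\<rho> a) + \<pi> a * rel_entr (X a) (Y a))"
    using assms by (intro sum.cong rel_entr_mult) auto
  finally show ?thesis .
qed

text \<open>Chain rule plus data processing for a two-stage experiment: draw a from \<pi> (resp. \<rho>),
  then flip a coin of bias X a (resp. Y a).\<close>
lemma kl_bounded_mixture:
  fixes \<pi> \<rho> X Y E :: "'a \<Rightarrow> real"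
  assumes "finite S" "sum \<pi> S = 1" "sum \<rho> S = 1"
    and "\<And>a. a \<in> S \<Longrightarrow> 0 \<le> \<pi> a \<and> 0 \<le> \<rho> a" "\<And>a. a \<in> S \<Longrightarrow> 0 < \<pi> a \<Longrightarrow> 0 < \<rho> a"
    and "\<And>a. a \<in> S \<Longrightarrow> kl_bounded (X a) (Y a) (E a)"
  shows "kl_bounded (\<Sum>a\<in>S. \<pi> a * X a) (\<Sum>a\<in>S. \<rho> a * Y a)
           ((\<Sum>a\<in>S. rel_entr (\<pi> a) (\<rho> a)) + (\<Sum>a\<in>S. \<pi> a * E a))"
proof -
  have XY: "0 \<le> X a" "0 \<le> Y a" "0 \<le> 1 - X a" "0 \<le> 1 - Y a"
    "0 < X a \<Longrightarrow> 0 < Y a" "0 < 1 - X a \<Longrightarrow> 0 < 1 - Y a" "kl_bernoulli (X a) (Y a) \<le> E a"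
    if "a \<in> S" for a
    using assms(6)[OF that] by (auto simp: kl_bounded_def)
  have compl: "1 - (\<Sum>a\<in>S. \<sigma> a * Z a) = (\<Sum>a\<in>S. \<sigma> a * (1 - Z a))"
    if "sum \<sigma> S = 1" for \<sigma> Z :: "'a \<Rightarrow> real"
    using that by (simp add: right_diff_distrib sum_subtractf)
  have "kl_bernoulli (\<Sum>a\<in>S. \<pi> a * X a) (\<Sum>a\<in>S. \<rho> a * Y a)
      \<le> (\<Sum>a\<in>S. X a * rel_entr (\<pi> a) (\<rho> a) + \<pi> a * rel_entr (X a) (Y a))
       + (\<Sum>a\<in>S. (1 - X a) * rel_entr (\<pi> a) (\<rho> a) + \<pi> a * rel_entr (1 - X a) (1 - Y a))"
    unfolding kl_bernoulli_def compl[OF assms(2)] compl[OF assms(3)]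
    using assms XY by (intro add_mono rel_entr_mixture_le) auto
  also have "\<dots> = (\<Sum>a\<in>S. rel_entr (\<pi> a) (\<rho> a)) + (\<Sum>a\<in>S. \<pi> a * kl_bernoulli (X a) (Y a))"
    unfolding sum.distrib[symmetric] by (intro sum.cong) (simp_all add: kl_bernoulli_def algebra_simps)
  also have "\<dots> \<le> (\<Sum>a\<in>S. rel_entr (\<pi> a) (\<rho> a)) + (\<Sum>a\<in>S. \<pi> a * E a)"
    using assms XY by (intro add_left_mono sum_mono mult_left_mono) auto
  finally have kl: "kl_bernoulli (\<Sum>a\<in>S. \<pi> a * X a) (\<Sum>a\<in>S. \<rho> a * Y a)
      \<le> (\<Sum>a\<in>S. rel_entr (\<pi> a) (\<rho> a)) + (\<Sum>a\<in>S. \<pi> a * E a)" .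
  have nn: "0 \<le> \<pi> a \<and> 0 \<le> \<rho> a \<and> 0 \<le> X a \<and> 0 \<le> Y a"
    and nn': "0 \<le> \<pi> a \<and> 0 \<le> \<rho> a \<and> 0 \<le> 1 - X a \<and> 0 \<le> 1 - Y a" if "a \<in> S" for a
    using assms(4)[OF that] XY[OF that] by simp_all
  have "0 \<le> (\<Sum>a\<in>S. \<pi> a * X a)" "0 \<le> (\<Sum>a\<in>S. \<pi> a * (1 - X a))"
    "0 \<le> (\<Sum>a\<in>S. \<rho> a * Y a)" "0 \<le> (\<Sum>a\<in>S. \<rho> a * (1 - Y a))"
    using nn nn' by (auto intro!: sum_nonneg)
  moreover have "0 < (\<Sum>a\<in>S. \<rho> a * Y a)" if "0 < (\<Sum>a\<in>S. \<pi> a * X a)"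
    using assms(1) that nn assms(5) XY(5) by (rule sum_mult_pos_transfer)
  moreover have "0 < (\<Sum>a\<in>S. \<rho> a * (1 - Y a))" if "0 < (\<Sum>a\<in>S. \<pi> a * (1 - X a))"
    using assms(1) that nn' assms(5) XY(6) by (rule sum_mult_pos_transfer)
  ultimately show ?thesis
    using kl compl[OF assms(2), of X] compl[OF assms(3), of Y] unfolding kl_bounded_def by auto
qed

lemma kl_bounded_bernoulli_mixture:
  assumes "p \<in> {0<..<1}" "q \<in> {0<..<1}" "kl_bounded x1 y1 e1" "kl_bounded x0 y0 e0"
  shows "kl_bounded (p * x1 + (1 - p) * x0) (q * y1 + (1 - q) * y0)
           (kl_bernoulli p q + p * e1 + (1 - p) * e0)"
proof -
  have "kl_bounded (\<Sum>b\<in>UNIV. (if b then p else 1 - p) * (if b then x1 else x0))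
      (\<Sum>b\<in>UNIV. (if b then q else 1 - q) * (if b then y1 else y0))
      ((\<Sum>b\<in>UNIV. rel_entr (if b then p else 1 - p) (if b then q else 1 - q))
        + (\<Sum>b\<in>UNIV. (if b then p else 1 - p) * (if b then e1 else e0)))"
    using assms by (intro kl_bounded_mixture) (auto simp: UNIV_bool)
  then show ?thesis
    by (simp add: UNIV_bool kl_bernoulli_def algebra_simps)
qed

lemma kl_bernoulli_le_chi_square:
  assumes "0 \<le> p" "p \<le> 1" "0 < q" "q < 1"
  shows "kl_bernoulli p q \<le> (p - q)\<^sup>2 / (q * (1 - q))"
proof -
  have "kl_bernoulli p q \<le> p * (p / q - 1) + (1 - p) * ((1 - p) / (1 - q) - 1)"
    unfolding kl_bernoulli_def using assms by (intro add_mono rel_entr_upper_bound) auto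
  also have "\<dots> = (p - q)\<^sup>2 / (q * (1 - q))"
    using assms by (simp add: field_simps power2_eq_square)
  finally show ?thesis .
qed

lemma kl_bernoulli_shift_le:
  assumes "0 \<le> delta" "0 < eps" "delta + eps \<le> 1/2"
  shows "kl_bernoulli delta (delta + eps) \<le> 2 * eps\<^sup>2 / (delta + eps)"
proof -
  have "kl_bernoulli delta (delta + eps) \<le> eps\<^sup>2 / ((delta + eps) * (1 - (delta + eps)))"
    using kl_bernoulli_le_chi_square[of delta "delta + eps"] assms by simp
  also have "\<dots> \<le> eps\<^sup>2 / ((delta + eps) * (1/2))"
    using assms by (intro divide_left_mono mult_left_mono mult_pos_pos) auto
  also have "\<dots> = 2 * eps\<^sup>2 / (delta + eps)"
    by simp
  finally show ?thesis .
qed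

lemma kl_bernoulli_half_le:
  assumes "\<bar>lam\<bar> \<le> 1/4"
  shows "kl_bernoulli (1/2) (1/2 + lam) \<le> 8 * lam\<^sup>2 / 3"
proof -
  define v where "v = 1 - 4 * lam\<^sup>2"
  have "lam\<^sup>2 \<le> 1/16"
    using assms power_mono[of "\<bar>lam\<bar>" "1/4" 2] by (simp add: power2_eq_square)
  then have pos: "0 < 1 - 2 * lam" "0 < 1 + 2 * lam" "3/4 \<le> v"
    using assms by (auto simp: v_def)
  have "(1 + 2 * lam) * (1 - 2 * lam) = v"
    by (simp add: v_def power2_eq_square algebra_simps)
  then have "ln v = ln (1 + 2 * lam) + ln (1 - 2 * lam)"
    using pos ln_mult[of "1 + 2 * lam" "1 - 2 * lam"] by simp
  moreover have "(1/2) / (1/2 + lam) = 1 / (1 + 2 * lam)" "(1 - 1/2) / (1 - (1/2 + lam)) = 1 / (1 - 2 * lam)"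
    using pos by (simp_all add: field_simps)
  ultimately have "kl_bernoulli (1/2) (1/2 + lam) = (1/2) * ln (1 / v)"
    using pos by (simp add: kl_bernoulli_def rel_entr_def ln_div algebra_simps)
  also have "\<dots> \<le> (1/2) * (1 / v - 1)"
    using pos by (simp add: ln_le_minus_one)
  also have "\<dots> = 2 * lam\<^sup>2 / v"
    using pos by (simp add: v_def field_simps)
  also have "\<dots> \<le> 2 * lam\<^sup>2 / (3/4)"
    using pos by (intro divide_left_mono) auto
  finally show ?thesis by simp
qed

lemma kl_bernoulli_quarter_half_ge:
  assumes "0 \<le> x" "x \<le> 1/4" "1/2 < y" "y < 1"
  shows "11/108 \<le> kl_bernoulli x y"
proof -
  have "ln (16/27) \<le> (16/27 - 1 :: real)"
    by (rule ln_le_minus_one) simp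
  moreover have "ln (16/27 :: real) = 4 * ln 2 - 3 * ln 3"
    using ln_realpow[of 2 4] ln_realpow[of 3 3] by (simp add: ln_div)
  ultimately have ln_bound: "11/27 \<le> 3 * ln 3 - 4 * ln (2::real)" by simp
  have "x * ln (1/2) + x - y * (1/2) \<le> rel_entr x y"
    using assms by (intro rel_entr_lower_bound) auto
  then have "x - y/2 - x * ln 2 \<le> rel_entr x y"
    by (simp add: ln_div)
  moreover have "(1 - x) * ln (3/2) + (1 - x) - (1 - y) * (3/2) \<le> rel_entr (1 - x) (1 - y)"
    using assms by (intro rel_entr_lower_bound) auto
  moreover have "(1 - x) * ln (3/2) + (1 - x) - (1 - y) * (3/2)
      = ln 3 - ln 2 - x * ln 3 + x * ln 2 - 1/2 - x + 3/2 * y"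
    by (simp add: ln_div; algebra)
  moreover have "x * ln 3 \<le> (1/4) * ln (3::real)"
    using assms by (intro mult_right_mono) auto
  ultimately show ?thesis
    using ln_bound assms unfolding kl_bernoulli_def by linarith
qed

lemma kl_bounded_le_half:
  assumes "kl_bounded x y e" "x \<le> 1/4" "e < 11/108"
  shows "y \<le> 1/2"
  using assms kl_bernoulli_quarter_half_ge[of x y] unfolding kl_bounded_def by force

lemma expectation_unit_interval:
  fixes f :: "'a \<Rightarrow> real"
  assumes "finite (set_pmf M)" "\<And>z. f z \<in> {0..1}"
  shows "measure_pmf.expectation M f \<in> {0..1}"
  using assms measure_pmf.integral_ge_const[of M f 0] measure_pmf.integral_le_const[of M f 1]
  by (auto simp: integrable_measure_pmf_finite)

lemma sum_expectation_le:
  fixes f :: "'i \<Rightarrow> 'a \<Rightarrow> real"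
  assumes "finite S" "finite (set_pmf M)" "\<And>z. z \<in> set_pmf M \<Longrightarrow> (\<Sum>j\<in>S. f j z) \<le> B"
  shows "(\<Sum>j\<in>S. measure_pmf.expectation M (f j)) \<le> B"
proof -
  have "(\<Sum>j\<in>S. measure_pmf.expectation M (f j)) = measure_pmf.expectation M (\<lambda>z. \<Sum>j\<in>S. f j z)"
    using assms(2) by (subst Bochner_Integration.integral_sum) (auto intro: integrable_measure_pmf_finite)
  also have "\<dots> \<le> B"
    using assms(2,3) by (intro measure_pmf.integral_le_const integrable_measure_pmf_finite)
      (auto simp: AE_measure_pmf_iff)
  finally show ?thesis .
qed

lemma card_exceeding_mult_le:
  fixes f :: "'a \<Rightarrow> real"
  assumes "finite S" "\<And>j. j \<in> S \<Longrightarrow> 0 \<le> f j"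
  shows "real (card {j \<in> S. t < f j}) * t \<le> (\<Sum>j\<in>S. f j)"
proof -
  have "real (card {j \<in> S. t < f j}) * t = (\<Sum>j\<in>{j \<in> S. t < f j}. t)"
    by simp
  also have "\<dots> \<le> (\<Sum>j\<in>{j \<in> S. t < f j}. f j)"
    by (intro sum_mono) auto
  also have "\<dots> \<le> (\<Sum>j\<in>S. f j)"
    using assms by (intro sum_mono2) auto
  finally show ?thesis .
qed

lemma exists_large_subset_below:
  fixes f g h :: "'a \<Rightarrow> real"
  assumes "finite S" "\<And>j. j \<in> S \<Longrightarrow> 0 \<le> f j \<and> 0 \<le> g j \<and> 0 \<le> h j"
    and "0 < s" "0 < t" "0 < u"
    and "(\<Sum>j\<in>S. f j) \<le> a * s" "(\<Sum>j\<in>S. g j) \<le> b * t" "(\<Sum>j\<in>S. h j) \<le> c * u"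
  shows "\<exists>J \<subseteq> S. real (card S) - (a + b + c) \<le> real (card J) \<and>
           (\<forall>j\<in>J. f j \<le> s \<and> g j \<le> t \<and> h j \<le> u)"
proof -
  define F G K where "F = {j \<in> S. s < f j}" and "G = {j \<in> S. t < g j}" and "K = {j \<in> S. u < h j}"
  have "real (card F) * s \<le> (\<Sum>j\<in>S. f j)" "real (card G) * t \<le> (\<Sum>j\<in>S. g j)"
    "real (card K) * u \<le> (\<Sum>j\<in>S. h j)"
    unfolding F_def G_def K_def using assms(1,2) by (intro card_exceeding_mult_le; simp)+
  then have "real (card F) * s \<le> a * s" "real (card G) * t \<le> b * t" "real (card K) * u \<le> c * u"
    using assms(6-8) by linarith+
  then have "real (card F) \<le> a" "real (card G) \<le> b" "real (card K) \<le> c"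
    using assms(3-5) by simp_all
  moreover have "card S \<le> card (S - (F \<union> G \<union> K)) + card F + card G + card K"
  proof -
    have "card S \<le> card ((S - (F \<union> G \<union> K)) \<union> F \<union> G \<union> K)"
      using assms(1) by (intro card_mono) (auto simp: F_def G_def K_def)
    then show ?thesis
      by (meson card_Un_le add_le_mono order_refl order_trans)
  qed
  ultimately show ?thesis
    by (intro exI[of _ "S - (F \<union> G \<union> K)"]) (auto simp: F_def G_def K_def not_less)
qed

lemma sum_prob_snd_eq_le_1:
  "(\<Sum>j\<in>S. measure_pmf.prob M {(h, k). k = j}) \<le> 1" if "finite S"
proof -
  have "(\<Sum>j\<in>S. measure_pmf.prob M {(h, k). k = j}) = measure_pmf.prob M (\<Union>j\<in>S. {(h, k). k = j})"
    using that by (intro measure_pmf.finite_measure_finite_Union[symmetric]) (auto simp: disjoint_family_on_def)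
  then show ?thesis
    by simp
qed

section \<open>The coin model\<close>

lemma finite_set_pmf_valid_alg:
  assumes "valid_alg Q H alg"
  shows "finite (set_pmf (alg h))"
proof (rule finite_subset)
  show "set_pmf (alg h) \<subseteq> case_prod Flip ` ({1..Q} \<times> {1, 2}) \<union> Stop ` {1..Q}"
  proof
    fix a assume "a \<in> set_pmf (alg h)"
    with assms show "a \<in> case_prod Flip ` ({1..Q} \<times> {1, 2}) \<union> Stop ` {1..Q}"
      by (cases a) (force simp: valid_alg_def)+
  qed
qed auto

lemma finite_set_pmf_run:
  assumes "\<And>h. finite (set_pmf (alg h))"
  shows "finite (set_pmf (run lam delta eps \<theta> alg n h))"
  by (induction n arbitrary: h) (auto simp: assms split: action.split)

lemma coins_run_subset:
  assumes "valid_alg Q H alg" "fst ` set h \<subseteq> {1..Q} \<times> {1, 2}"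
    and "z \<in> set_pmf (run lam delta eps \<theta> alg n h)"
  shows "fst ` set (fst z) \<subseteq> {1..Q} \<times> {1, 2}"
  using assms(2,3)
proof (induction n arbitrary: h)
  case 0
  then have "fst z = h"
    by (auto split: action.splits)
  then show ?case
    using 0 by simp
next
  case (Suc n)
  then obtain a where a: "a \<in> set_pmf (alg h)"
    and z: "z \<in> set_pmf (case a of Stop k \<Rightarrow> return_pmf (h, k)
      | Flip r c \<Rightarrow> bernoulli_pmf (coin_prob lam delta eps \<theta> r c) \<bind>
                     (\<lambda>b. run lam delta eps \<theta> alg n (h @ [((r, c), b)])))"
    by auto
  show ?case
  proof (cases a)
    case (Flip r c)
    then have "(r, c) \<in> {1..Q} \<times> {1, 2}"
      using assms(1) a by (auto simp: valid_alg_def)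
    then have "fst ` set (h @ [((r, c), b)]) \<subseteq> {1..Q} \<times> {1, 2}" for b
      using Suc.prems(1) by auto
    moreover obtain b where "z \<in> set_pmf (run lam delta eps \<theta> alg n (h @ [((r, c), b)]))"
      using z Flip by auto
    ultimately show ?thesis
      using Suc.IH by blast
  qed (use Suc z in auto)
qed

definition coin_flips :: "nat \<times> nat \<Rightarrow> history \<Rightarrow> nat" where
  "coin_flips coin h = length (filter (\<lambda>x. fst x = coin) h)"

lemma sum_coin_flips_le:
  "(\<Sum>j\<in>S. coin_flips (j, c) h) \<le> length (filter (\<lambda>x. snd (fst x) = c) h)"
proof (induction h)
  case (Cons x h)
  obtain r c' b where x: "x = ((r, c'), b)"
    by (metis prod.collapse)
  have flips: "coin_flips (j, c) (x # h) = of_bool ((r, c') = (j, c)) + coin_flips (j, c) h" for j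
    by (simp add: coin_flips_def x)
  have "(\<Sum>j\<in>S. of_bool ((r, c') = (j, c))) \<le> (of_bool (c' = c) :: nat)"
  proof (cases "c' = c \<and> finite S")
    case True
    then show ?thesis using card_mono[of "{r}" "S \<inter> {r}"] by simp
  qed auto
  then have "(\<Sum>j\<in>S. coin_flips (j, c) (x # h))
      \<le> of_bool (c' = c) + length (filter (\<lambda>x. snd (fst x) = c) h)"
    using Cons unfolding flips sum.distrib by (rule add_mono)
  moreover have "length (filter (\<lambda>x. snd (fst x) = c) (x # h))
      = of_bool (c' = c) + length (filter (\<lambda>x. snd (fst x) = c) h)"
    by (simp add: x)
  ultimately show ?case
    by linarith
qed (simp add: coin_flips_def)

lemma sum_expected_coin_flips_le:
  assumes "finite S" "finite (set_pmf M)"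
    and "\<And>z. z \<in> set_pmf M \<Longrightarrow> real (length (filter (\<lambda>x. snd (fst x) = c) (fst z))) \<le> B"
  shows "(\<Sum>j\<in>S. measure_pmf.expectation M (\<lambda>z. real (coin_flips (j, c) (fst z)))) \<le> B"
proof (rule sum_expectation_le[OF assms(1,2)])
  fix z assume z: "z \<in> set_pmf M"
  have "real (\<Sum>j\<in>S. coin_flips (j, c) (fst z)) \<le> real (length (filter (\<lambda>x. snd (fst x) = c) (fst z)))"
    using sum_coin_flips_le by (simp only: of_nat_le_iff)
  then show "(\<Sum>j\<in>S. real (coin_flips (j, c) (fst z))) \<le> B"
    using assms(3)[OF z] unfolding of_nat_sum[symmetric] by linarith
qed

lemma exists_quiet_rows:
  fixes M :: "(history \<times> nat) pmf"
  assumes "finite (set_pmf M)" "0 < Q" "0 < t1" "0 < t2"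
    and "\<And>z. z \<in> set_pmf M \<Longrightarrow>
           real (N1 (fst z)) \<le> real Q / 4 * t1 \<and> real (N2 (fst z)) \<le> real Q / 4 * t2"
  shows "\<exists>J \<subseteq> {1..Q}. real Q / 6 \<le> real (card J) \<and>
           (\<forall>j\<in>J. measure_pmf.prob M {(h, k). k = j} \<le> 3 / real Q
              \<and> measure_pmf.expectation M (\<lambda>z. real (coin_flips (j, 1) (fst z))) \<le> t1
              \<and> measure_pmf.expectation M (\<lambda>z. real (coin_flips (j, 2) (fst z))) \<le> t2)"
proof -
  have sx: "(\<Sum>j\<in>{1..Q}. measure_pmf.prob M {(h, k). k = j}) \<le> real Q / 3 * (3 / real Q)"
    using sum_prob_snd_eq_le_1[of "{1..Q}" M] assms(2) by simp
  have sb: "(\<Sum>j\<in>{1..Q}. measure_pmf.expectation M (\<lambda>z. real (coin_flips (j, 1) (fst z))))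
      \<le> real Q / 4 * t1"
    using assms(5) by (intro sum_expected_coin_flips_le[OF _ assms(1)]) (auto simp: N1_def)
  have sc: "(\<Sum>j\<in>{1..Q}. measure_pmf.expectation M (\<lambda>z. real (coin_flips (j, 2) (fst z))))
      \<le> real Q / 4 * t2"
    using assms(5) by (intro sum_expected_coin_flips_le[OF _ assms(1)]) (auto simp: N2_def)
  obtain J where "J \<subseteq> {1..Q}" "real Q - (real Q / 3 + real Q / 4 + real Q / 4) \<le> card J"
    "\<forall>j\<in>J. measure_pmf.prob M {(h, k). k = j} \<le> 3 / real Q
      \<and> measure_pmf.expectation M (\<lambda>z. real (coin_flips (j, 1) (fst z))) \<le> t1
      \<and> measure_pmf.expectation M (\<lambda>z. real (coin_flips (j, 2) (fst z))) \<le> t2"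
    using exists_large_subset_below[OF _ _ _ _ _ sx sb sc] assms(2-4) by (auto intro: integral_nonneg_AE)
  then show ?thesis
    by (intro exI[of _ J]) auto
qed

locale coin_problem =
  fixes lam delta eps :: real
  assumes coin_prob_pos [simp]: "0 < coin_prob lam delta eps \<theta> r c"
    and coin_prob_less_1 [simp]: "coin_prob lam delta eps \<theta> r c < 1"
begin

abbreviation heads :: "nat \<Rightarrow> nat \<Rightarrow> nat \<Rightarrow> real" where
  "heads \<equiv> coin_prob lam delta eps"

abbreviation outcome :: "nat \<Rightarrow> algorithm \<Rightarrow> nat \<Rightarrow> history \<Rightarrow> (history \<times> nat) pmf" where
  "outcome \<equiv> run lam delta eps"

lemma set_pmf_outcome_indep:
  "set_pmf (outcome \<theta> alg n h) = set_pmf (outcome \<theta>' alg n h)"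
proof (induction n arbitrary: h)
  case (Suc n)
  have "set_pmf (case a of Stop k \<Rightarrow> return_pmf (h, k)
          | Flip r c \<Rightarrow> bernoulli_pmf (heads \<theta> r c) \<bind> (\<lambda>b. outcome \<theta> alg n (h @ [((r, c), b)])))
      = set_pmf (case a of Stop k \<Rightarrow> return_pmf (h, k)
          | Flip r c \<Rightarrow> bernoulli_pmf (heads \<theta>' r c) \<bind> (\<lambda>b. outcome \<theta>' alg n (h @ [((r, c), b)])))"
    for a
    using Suc by (cases a) auto
  then show ?case
    by simp
qed simp

definition next_expectation ::
    "nat \<Rightarrow> algorithm \<Rightarrow> nat \<Rightarrow> history \<Rightarrow> (history \<times> nat \<Rightarrow> real) \<Rightarrow> action \<Rightarrow> real" where
  "next_expectation \<theta> alg n h g a = (case a of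
      Stop k \<Rightarrow> g (h, k)
    | Flip r c \<Rightarrow> heads \<theta> r c * measure_pmf.expectation (outcome \<theta> alg n (h @ [((r, c), True)])) g
        + (1 - heads \<theta> r c) * measure_pmf.expectation (outcome \<theta> alg n (h @ [((r, c), False)])) g)"

lemma expectation_outcome_Suc:
  assumes fin: "\<And>h. finite (set_pmf (alg h))"
  shows "measure_pmf.expectation (outcome \<theta> alg (Suc n) h) g
           = (\<Sum>a\<in>set_pmf (alg h). pmf (alg h) a * next_expectation \<theta> alg n h g a)"
proof -
  have "measure_pmf.expectation (case a of Stop k \<Rightarrow> return_pmf (h, k)
          | Flip r c \<Rightarrow> bernoulli_pmf (heads \<theta> r c) \<bind> (\<lambda>b. outcome \<theta> alg n (h @ [((r, c), b)]))) g
      = next_expectation \<theta> alg n h g a" for a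
    by (cases a) (simp_all add: next_expectation_def pmf_expectation_bind[of UNIV] finite_set_pmf_run
        fin UNIV_bool less_imp_le)
  then show ?thesis
    by (simp add: pmf_expectation_bind[of "set_pmf (alg h)"] fin finite_set_pmf_run split: action.split)
qed

definition history_kl :: "nat \<Rightarrow> nat \<Rightarrow> history \<Rightarrow> real" where
  "history_kl \<theta> \<theta>' h = (\<Sum>((r, c), _)\<leftarrow>h. kl_bernoulli (heads \<theta> r c) (heads \<theta>' r c))"

lemma kl_bounded_next_expectation:
  fixes f :: "history \<times> nat \<Rightarrow> real"
  assumes f: "\<And>z. f z \<in> {0..1}"
    and IH: "\<And>h'. kl_bounded (measure_pmf.expectation (outcome \<theta> alg n h') f)
      (measure_pmf.expectation (outcome \<theta>' alg n h') f)
      (measure_pmf.expectation (outcome \<theta> alg n h') (\<lambda>z. history_kl \<theta> \<theta>' (fst z)) - history_kl \<theta> \<theta>' h')"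
  shows "kl_bounded (next_expectation \<theta> alg n h f a) (next_expectation \<theta>' alg n h f a)
    (next_expectation \<theta> alg n h (\<lambda>z. history_kl \<theta> \<theta>' (fst z)) a - history_kl \<theta> \<theta>' h)"
proof (cases a)
  case (Stop k)
  then show ?thesis
    using f by (simp add: next_expectation_def kl_bounded_refl)
next
  case (Flip r c)
  define W where "W = (\<lambda>z :: history \<times> nat. history_kl \<theta> \<theta>' (fst z))"
  have snoc: "history_kl \<theta> \<theta>' (h @ [((r, c), b)])
      = history_kl \<theta> \<theta>' h + kl_bernoulli (heads \<theta> r c) (heads \<theta>' r c)" for b
    by (simp add: history_kl_def)
  have "kl_bounded (next_expectation \<theta> alg n h f a) (next_expectation \<theta>' alg n h f a)
     (kl_bernoulli (heads \<theta> r c) (heads \<theta>' r c)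
       + heads \<theta> r c * (measure_pmf.expectation (outcome \<theta> alg n (h @ [((r, c), True)])) W
           - history_kl \<theta> \<theta>' (h @ [((r, c), True)]))
       + (1 - heads \<theta> r c) * (measure_pmf.expectation (outcome \<theta> alg n (h @ [((r, c), False)])) W
           - history_kl \<theta> \<theta>' (h @ [((r, c), False)])))"
    unfolding Flip next_expectation_def W_def action.case
    by (intro kl_bounded_bernoulli_mixture IH) simp_all
  then show ?thesis
    by (rule kl_bounded_mono) (simp add: Flip next_expectation_def W_def snoc algebra_simps)
qed

lemma kl_bounded_outcome:
  fixes f :: "history \<times> nat \<Rightarrow> real"
  assumes fin: "\<And>h. finite (set_pmf (alg h))" and f: "\<And>z. f z \<in> {0..1}"
  shows "kl_bounded (measure_pmf.expectation (outcome \<theta> alg n h) f)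
           (measure_pmf.expectation (outcome \<theta>' alg n h) f)
           (measure_pmf.expectation (outcome \<theta> alg n h) (\<lambda>z. history_kl \<theta> \<theta>' (fst z))
             - history_kl \<theta> \<theta>' h)"
proof (induction n arbitrary: h)
  case 0
  have "fst z = h" if "z \<in> set_pmf (outcome \<theta> alg 0 h)" for z
    using that by (auto split: action.splits)
  then have "measure_pmf.expectation (outcome \<theta> alg 0 h) (\<lambda>z. history_kl \<theta> \<theta>' (fst z))
      = measure_pmf.expectation (outcome \<theta> alg 0 h) (\<lambda>_. history_kl \<theta> \<theta>' h)"
    by (intro integral_cong_AE) (auto simp: AE_measure_pmf_iff)
  moreover have "outcome \<theta>' alg 0 h = outcome \<theta> alg 0 h"
    by simp
  moreover have "measure_pmf.expectation (outcome \<theta> alg 0 h) f \<in> {0..1}"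
    using finite_set_pmf_run[OF fin] f by (rule expectation_unit_interval)
  ultimately show ?case
    using kl_bounded_refl by (simp del: run.simps)
next
  case (Suc n)
  let ?W = "\<lambda>z. history_kl \<theta> \<theta>' (fst z)"
  have "kl_bounded (\<Sum>a\<in>set_pmf (alg h). pmf (alg h) a * next_expectation \<theta> alg n h f a)
      (\<Sum>a\<in>set_pmf (alg h). pmf (alg h) a * next_expectation \<theta>' alg n h f a)
      ((\<Sum>a\<in>set_pmf (alg h). rel_entr (pmf (alg h) a) (pmf (alg h) a))
        + (\<Sum>a\<in>set_pmf (alg h).
             pmf (alg h) a * (next_expectation \<theta> alg n h ?W a - history_kl \<theta> \<theta>' h)))"
    using f Suc.IH
    by (intro kl_bounded_mixture kl_bounded_next_expectation) (auto simp: fin sum_pmf_eq_1)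
  moreover have "(\<Sum>a\<in>set_pmf (alg h).
        pmf (alg h) a * (next_expectation \<theta> alg n h ?W a - history_kl \<theta> \<theta>' h))
      = (\<Sum>a\<in>set_pmf (alg h). pmf (alg h) a * next_expectation \<theta> alg n h ?W a)
        - history_kl \<theta> \<theta>' h"
    using fin by (simp add: right_diff_distrib sum_subtractf sum_pmf_eq_1 flip: sum_distrib_right)
  ultimately show ?case
    unfolding expectation_outcome_Suc[OF fin] by simp
qed

lemma prob_outcome_le_half:
  assumes fin: "\<And>h. finite (set_pmf (alg h))"
    and "measure_pmf.prob (outcome \<theta> alg n h) A \<le> 1/4"
    and "measure_pmf.expectation (outcome \<theta> alg n h) (\<lambda>z. history_kl \<theta> \<theta>' (fst z))
           - history_kl \<theta> \<theta>' h < 11/108"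
  shows "measure_pmf.prob (outcome \<theta>' alg n h) A \<le> 1/2"
proof -
  have "kl_bounded (measure_pmf.prob (outcome \<theta> alg n h) A) (measure_pmf.prob (outcome \<theta>' alg n h) A)
      (measure_pmf.expectation (outcome \<theta> alg n h) (\<lambda>z. history_kl \<theta> \<theta>' (fst z)) - history_kl \<theta> \<theta>' h)"
    using kl_bounded_outcome[OF fin, of "indicator A"] by (simp add: indicator_def)
  then show ?thesis
    using assms(2,3) by (rule kl_bounded_le_half)
qed

lemma history_kl_null:
  assumes "1 \<le> j" "fst ` set h \<subseteq> {1..} \<times> {1, 2}"
  shows "history_kl 0 j h = kl_bernoulli (1/2) (1/2 + lam) * coin_flips (j, 1) h
           + kl_bernoulli delta (delta + eps) * coin_flips (j, 2) h"
  using assms(2)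
proof (induction h)
  case (Cons x h)
  obtain r c b where x: "x = ((r, c), b)"
    by (metis prod.collapse)
  have "1 \<le> r" "c \<in> {1, 2}"
    using Cons.prems x by auto
  then have "history_kl 0 j (x # h) = history_kl 0 j h
      + of_bool ((r, c) = (j, 1)) * kl_bernoulli (1/2) (1/2 + lam)
      + of_bool ((r, c) = (j, 2)) * kl_bernoulli delta (delta + eps)"
    using assms(1) by (auto simp: history_kl_def x coin_prob_def)
  then show ?case
    using Cons by (simp add: coin_flips_def x algebra_simps)
qed (simp add: history_kl_def coin_flips_def)

lemma expectation_history_kl_null:
  assumes "valid_alg Q H alg" "1 \<le> j"
  shows "measure_pmf.expectation (outcome 0 alg n []) (\<lambda>z. history_kl 0 j (fst z))
    = kl_bernoulli (1/2) (1/2 + lam)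
        * measure_pmf.expectation (outcome 0 alg n []) (\<lambda>z. real (coin_flips (j, 1) (fst z)))
      + kl_bernoulli delta (delta + eps)
        * measure_pmf.expectation (outcome 0 alg n []) (\<lambda>z. real (coin_flips (j, 2) (fst z)))"
    (is "_ = ?rhs")
proof -
  have fin: "finite (set_pmf (outcome 0 alg n []))"
    using assms(1) by (intro finite_set_pmf_run finite_set_pmf_valid_alg)
  have "fst ` set (fst z) \<subseteq> {1..} \<times> {1, 2}" if "z \<in> set_pmf (outcome 0 alg n [])" for z
    using coins_run_subset[OF assms(1) _ that] by force
  then have "measure_pmf.expectation (outcome 0 alg n []) (\<lambda>z. history_kl 0 j (fst z))
    = measure_pmf.expectation (outcome 0 alg n [])
        (\<lambda>z. kl_bernoulli (1/2) (1/2 + lam) * real (coin_flips (j, 1) (fst z))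
          + kl_bernoulli delta (delta + eps) * real (coin_flips (j, 2) (fst z)))"
    using assms(2) by (intro integral_cong_AE) (auto simp: AE_measure_pmf_iff history_kl_null)
  also have "\<dots> = ?rhs"
    using fin by (simp add: integrable_measure_pmf_finite)
  finally show ?thesis .
qed

lemma prob_correct_guess_le_half:
  assumes "valid_alg Q H alg" "1 \<le> j" "\<bar>lam\<bar> \<le> 1/4" "0 \<le> delta" "0 < eps" "delta + eps \<le> 1/2"
    and "measure_pmf.prob (outcome 0 alg n []) {(h, k). k = j} \<le> 1/4"
    and "measure_pmf.expectation (outcome 0 alg n []) (\<lambda>z. real (coin_flips (j, 1) (fst z)))
           \<le> 1 / (40 * lam\<^sup>2)"
    and "measure_pmf.expectation (outcome 0 alg n []) (\<lambda>z. real (coin_flips (j, 2) (fst z)))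
           \<le> (delta + eps) / (64 * eps\<^sup>2)"
  shows "measure_pmf.prob (outcome j alg n []) {(h, k). k = j} \<le> 1/2"
proof (rule prob_outcome_le_half)
  show "finite (set_pmf (alg h))" for h
    using assms(1) by (rule finite_set_pmf_valid_alg)
  have "kl_bernoulli (1/2) (1/2 + lam)
      * measure_pmf.expectation (outcome 0 alg n []) (\<lambda>z. real (coin_flips (j, 1) (fst z)))
      \<le> 8 * lam\<^sup>2 / 3 * (1 / (40 * lam\<^sup>2))"
    using assms(3,8) by (intro mult_mono kl_bernoulli_half_le) auto
  also have "\<dots> \<le> 1/15"
    by (cases "lam = 0") simp_all
  finally have "kl_bernoulli (1/2) (1/2 + lam)
      * measure_pmf.expectation (outcome 0 alg n []) (\<lambda>z. real (coin_flips (j, 1) (fst z))) \<le> 1/15" .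
  moreover have "kl_bernoulli delta (delta + eps)
      * measure_pmf.expectation (outcome 0 alg n []) (\<lambda>z. real (coin_flips (j, 2) (fst z)))
      \<le> 2 * eps\<^sup>2 / (delta + eps) * ((delta + eps) / (64 * eps\<^sup>2))"
    using assms(4-6,9) by (intro mult_mono kl_bernoulli_shift_le) auto
  moreover have "2 * eps\<^sup>2 / (delta + eps) * ((delta + eps) / (64 * eps\<^sup>2)) = 1/32"
    using assms(4,5) by (simp add: power2_eq_square)
  ultimately show "measure_pmf.expectation (outcome 0 alg n []) (\<lambda>z. history_kl 0 j (fst z))
      - history_kl 0 j [] < 11/108"
    using expectation_history_kl_null[OF assms(1,2)] by (simp add: history_kl_def)
qed (fact assms(7))

end

theorem lemma7:
  fixes Q H :: nat and delta lam eps :: real and alg :: algorithm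
  assumes "Q \<ge> 12" and "H > 0"
    and "0 < delta" "delta \<le> 1/4" and "0 < lam" "lam \<le> 1/4" and "0 < eps" "eps \<le> 1/4"
    and "valid_alg Q H alg"
    and "\<forall>j \<in> {1..Q}. \<forall>(h, k) \<in> set_pmf (P lam delta eps H alg j).
           real (N1 h) \<le> real Q / (4 * 40 * lam\<^sup>2) \<and>
           real (N2 h) \<le> real Q * (delta + eps) / (4 * 64 * eps\<^sup>2)"
  shows "\<exists>J \<subseteq> {1..Q}. real (card J) \<ge> real Q / 6 \<and>
           (\<forall>j \<in> J. measure_pmf.prob (P lam delta eps H alg j) {(h, k). k = j} \<le> 1/2)"
proof -
  interpret coin_problem lam delta eps
    using assms(3-8) by unfold_locales (auto simp: coin_prob_def)
  have fin: "finite (set_pmf (alg h))" for h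
    using assms(9) by (rule finite_set_pmf_valid_alg)
  text \<open>Row 0 does not exist, so special row 0 is the world without any biased coin. Its runs
    have the same support as those of every other world, so the budget applies to it.\<close>
  define P0 where "P0 = outcome 0 alg H []"
  have budget: "real (N1 (fst z)) \<le> real Q / 4 * (1 / (40 * lam\<^sup>2)) \<and>
      real (N2 (fst z)) \<le> real Q / 4 * ((delta + eps) / (64 * eps\<^sup>2))" if "z \<in> set_pmf P0" for z
    using assms(1,10) that set_pmf_outcome_indep[of 0 alg H "[]" 1]
    unfolding P0_def P_def by (cases z) fastforce
  obtain J where J: "J \<subseteq> {1..Q}" "real Q / 6 \<le> real (card J)"
    and quiet: "\<forall>j\<in>J. measure_pmf.prob P0 {(h, k). k = j} \<le> 3 / real Q
      \<and> measure_pmf.expectation P0 (\<lambda>z. real (coin_flips (j, 1) (fst z))) \<le> 1 / (40 * lam\<^sup>2)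
      \<and> measure_pmf.expectation P0 (\<lambda>z. real (coin_flips (j, 2) (fst z))) \<le> (delta + eps) / (64 * eps\<^sup>2)"
    using exists_quiet_rows[of P0 Q "1 / (40 * lam\<^sup>2)" "(delta + eps) / (64 * eps\<^sup>2)"]
      budget finite_set_pmf_run[OF fin] assms(1,3,5,7) unfolding P0_def by auto
  have "3 / real Q \<le> 1/4"
    using assms(1) by (simp add: field_simps)
  then have "measure_pmf.prob (P lam delta eps H alg j) {(h, k). k = j} \<le> 1/2" if "j \<in> J" for j
    unfolding P_def using quiet that J(1) assms(3-8)
    by (intro prob_correct_guess_le_half[OF assms(9)]) (auto simp: P0_def)
  with J show ?thesis
    by blast
qed

end
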